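(* For positive integers $m$ and $n$, \[ \overline{{m+n+1 \brack m+1}}_{q,t} =1 + \sum_{j=1}^{n} q^{j} \left( \overline{{m+j \brack j}}_{q,t} + t\, \overline{{m+j-1 \brack j-1}}_{q,t} \right). \]
   Context: An overpartition is a partition in which the last occurrence of each distinct part size may be overlined; its weight $|\lambda|$ is the sum of its parts. For integers $0\le b\le a$, $\overline{{a \brack b}}_{q,t}=\sum_{\lambda} t^{\#_o(\lambda)} q^{|\lambda|}$, the sum over all overpartitions $\lambda$ with largest part at most $a-b$ and at most $b$ parts, $\#_o(\lambda)$ being the number of overlined parts. *)

theory Defs
  imports Main
begin

text \<open>An overpartition is encoded by its multiplicity function c (c i = number of
  parts equal to i; only positive parts) together with the set S of part sizes
  whose last occurrence is overlined (S must consist of part sizes that occur).\<close>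

definition overpartitions_bounded :: "nat \<Rightarrow> nat \<Rightarrow> ((nat \<Rightarrow> nat) \<times> nat set) set" where
  "overpartitions_bounded k b =
     {(c, S). (\<forall>i. c i \<noteq> 0 \<longrightarrow> 1 \<le> i \<and> i \<le> k)
            \<and> (\<Sum>i\<in>{i. c i \<noteq> 0}. c i) \<le> b
            \<and> S \<subseteq> {i. c i \<noteq> 0}}"

definition op_weight :: "(nat \<Rightarrow> nat) \<Rightarrow> nat" where
  "op_weight c = (\<Sum>i\<in>{i. c i \<noteq> 0}. i * c i)"

definition over_gauss :: "nat \<Rightarrow> nat \<Rightarrow> 'a::comm_ring_1 \<Rightarrow> 'a \<Rightarrow> 'a" where
  "over_gauss a b q t =
     (\<Sum>(c, S)\<in>overpartitions_bounded (a - b) b. t ^ card S * q ^ op_weight c)"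

end

theory Submission
  imports Defs
begin

text \<open>Let G k b be the generating function of overpartitions with parts at most k and at most b
  parts, so that the bracket [a, b] is G (a - b) b. Sorting by the largest admissible part k + 1
  (absent; present and still present after removing one copy; present once and overlined) gives
  G (k+1) (b+1) = G k (b+1) + q^(k+1) (G (k+1) b + t G k b), with G = 1 on the boundary.
  This recurrence alone forces the symmetry G k b = G b k (conjugation), and telescoping it in k
  gives the identity once the brackets on the right are read with the parameters swapped.\<close>

lemma mem_overpartitions_bounded:
  "(c, S) \<in> overpartitions_bounded k b \<longleftrightarrow>
     {i. c i \<noteq> 0} \<subseteq> {1..k} \<and> sum c {1..k} \<le> b \<and> S \<subseteq> {i. c i \<noteq> 0}"
proof -
  have "sum c {i. c i \<noteq> 0} = sum c {1..k}" if "{i. c i \<noteq> 0} \<subseteq> {1..k}"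
    using that by (intro sum.mono_neutral_left) auto
  moreover have "(\<forall>i. c i \<noteq> 0 \<longrightarrow> 1 \<le> i \<and> i \<le> k) \<longleftrightarrow> {i. c i \<noteq> 0} \<subseteq> {1..k}"
    by auto
  ultimately show ?thesis
    unfolding overpartitions_bounded_def by (simp only: mem_Collect_eq prod.case) metis
qed

lemma finite_overpartitions_bounded: "finite (overpartitions_bounded k b)"
proof (rule finite_subset)
  let ?C = "{c. \<forall>i. (i \<in> {1..k} \<longrightarrow> c i \<in> {0..b}) \<and> (i \<notin> {1..k} \<longrightarrow> c i = 0)}"
  show "overpartitions_bounded k b \<subseteq> ?C \<times> Pow {1..k}"
  proof clarify
    fix c S assume "(c, S) \<in> overpartitions_bounded k b"
    then have supp: "{i. c i \<noteq> 0} \<subseteq> {1..k}" and parts: "sum c {1..k} \<le> b"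
      and S: "S \<subseteq> {i. c i \<noteq> 0}"
      by (simp_all add: mem_overpartitions_bounded)
    have "c i \<le> b" if "i \<in> {1..k}" for i
      using that parts member_le_sum[of i "{1..k}" c] by simp
    then show "c \<in> ?C \<and> S \<in> Pow {1..k}" using supp S by auto
  qed
  show "finite (?C \<times> Pow {1..k})"
    by (intro finite_cartesian_product finite_set_of_finite_funs) simp_all
qed

lemma overpartitions_bounded_0_left: "overpartitions_bounded 0 b = {(\<lambda>_. 0, {})}"
  by (auto simp: mem_overpartitions_bounded)

lemma overpartitions_bounded_0_right: "overpartitions_bounded k 0 = {(\<lambda>_. 0, {})}"
proof -
  have "c i = 0" if "(c, S) \<in> overpartitions_bounded k 0" for c S i
  proof -
    have "{i. c i \<noteq> 0} \<subseteq> {1..k}" and "\<forall>i\<in>{1..k}. c i = 0"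
      using that by (simp_all add: mem_overpartitions_bounded)
    then show ?thesis by blast
  qed
  then show ?thesis by (fastforce simp: mem_overpartitions_bounded)
qed

lemma overpartitions_bounded_Suc_no_top_part:
  "{(c, S) \<in> overpartitions_bounded (Suc k) b. c (Suc k) = 0} = overpartitions_bounded k b"
proof -
  have supp: "{i. c i \<noteq> 0} \<subseteq> {1..Suc k} \<and> c (Suc k) = 0 \<longleftrightarrow> {i. c i \<noteq> 0} \<subseteq> {1..k}"
    for c :: "nat \<Rightarrow> nat"
    by (force simp: subset_iff le_Suc_eq)
  have parts: "sum c {1..Suc k} = sum c {1..k}" if "c (Suc k) = 0" for c :: "nat \<Rightarrow> nat"
    using that by simp
  have "(c, S) \<in> overpartitions_bounded (Suc k) b \<and> c (Suc k) = 0 \<longleftrightarrow>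
      (c, S) \<in> overpartitions_bounded k b" for c S
    unfolding mem_overpartitions_bounded using supp[of c] parts[of c] by metis
  then show ?thesis by blast
qed

lemma sum_fun_upd_add:
  fixes f :: "'a \<Rightarrow> 'b::comm_monoid_add"
  assumes "finite A" "i \<in> A"
  shows "sum (f(i := v)) A + f i = sum f A + v"
proof -
  have "sum (f(i := v)) (A - {i}) = sum f (A - {i})" by (rule sum.cong) auto
  with assms show ?thesis by (simp add: sum.remove ac_simps)
qed

lemma op_weight_eq_sum:
  "finite F \<Longrightarrow> {i. c i \<noteq> 0} \<subseteq> F \<Longrightarrow> op_weight c = (\<Sum>i\<in>F. i * c i)"
  unfolding op_weight_def by (rule sum.mono_neutral_left) auto

lemma op_weight_fun_upd:
  assumes "finite {j. c j \<noteq> 0}"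
  shows "op_weight (c(i := v)) + i * c i = op_weight c + i * v"
proof -
  let ?F = "insert i {j. c j \<noteq> 0}"
  have fin: "finite ?F" using assms by simp
  have upd: "(\<lambda>j. j * (c(i := v)) j) = (\<lambda>j. j * c j)(i := i * v)"
    by (simp add: fun_eq_iff)
  have "op_weight (c(i := v)) = sum ((\<lambda>j. j * c j)(i := i * v)) ?F"
    unfolding upd[symmetric] using fin by (intro op_weight_eq_sum) auto
  moreover have "op_weight c = (\<Sum>j\<in>?F. j * c j)"
    using fin by (intro op_weight_eq_sum) auto
  ultimately show ?thesis
    using sum_fun_upd_add[OF fin insertI1, of "\<lambda>j. j * c j" "i * v"] by (simp only:)
qed

lemma op_weight_add_part:
  "finite {j. c j \<noteq> 0} \<Longrightarrow> op_weight (c(i := Suc (c i))) = op_weight c + i"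
  using op_weight_fun_upd[of c i "Suc (c i)"] by simp

definition op_monomial :: "'a::comm_ring_1 \<Rightarrow> 'a \<Rightarrow> (nat \<Rightarrow> nat) \<times> nat set \<Rightarrow> 'a" where
  "op_monomial q t = (\<lambda>(c, S). t ^ card S * q ^ op_weight c)"

lemma op_monomial_empty [simp]: "op_monomial q t (\<lambda>_. 0, {}) = 1"
  by (simp add: op_monomial_def op_weight_def)

lemma sum_op_monomial_plain_top:
  "sum (op_monomial q t)
     {(c, S) \<in> overpartitions_bounded (Suc k) (Suc b). c (Suc k) \<noteq> 0 \<and> (c (Suc k) = 1 \<longrightarrow> Suc k \<notin> S)}
   = q ^ Suc k * sum (op_monomial q t) (overpartitions_bounded (Suc k) b)"
  (is "sum _ ?A = _ * sum _ ?B")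
proof -
  let ?K = "Suc k"
  have "sum (op_monomial q t) ?A = (\<Sum>x\<in>?B. q ^ ?K * op_monomial q t x)"
  proof (rule sum.reindex_bij_witness[where i = "\<lambda>(c, S). (c(?K := Suc (c ?K)), S)"
        and j = "\<lambda>(c, S). (c(?K := c ?K - 1), S)"])
    fix x assume "x \<in> ?A"
    then obtain c S where x: "x = (c, S)" and supp: "{i. c i \<noteq> 0} \<subseteq> {1..?K}"
      and parts: "sum c {1..?K} \<le> Suc b" and S: "S \<subseteq> {i. c i \<noteq> 0}"
      and top: "c ?K \<noteq> 0" "c ?K = 1 \<longrightarrow> ?K \<notin> S"
      by (auto simp: mem_overpartitions_bounded)
    define d where "d = c(?K := c ?K - 1)"
    have c: "c = d(?K := Suc (d ?K))" using top by (auto simp: d_def)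
    have supp_d: "{i. d i \<noteq> 0} \<subseteq> {1..?K}" using supp by (auto simp: d_def)
    have "sum c {1..?K} = Suc (sum d {1..?K})"
      using sum_fun_upd_add[of "{1..?K}" ?K d "Suc (d ?K)"] c by simp
    moreover have "op_weight c = op_weight d + ?K"
      using supp_d c op_weight_add_part[of d ?K] by (metis finite_atLeastAtMost finite_subset)
    moreover have "S \<subseteq> {i. d i \<noteq> 0}" using S top by (auto simp: d_def)
    ultimately show "(case x of (c, S) \<Rightarrow> (c(?K := c ?K - 1), S)) \<in> ?B"
      and "q ^ ?K * op_monomial q t (case x of (c, S) \<Rightarrow> (c(?K := c ?K - 1), S)) = op_monomial q t x"
      using supp_d parts x by (auto simp: mem_overpartitions_bounded op_monomial_def power_add d_def)
    show "(case case x of (c, S) \<Rightarrow> (c(?K := c ?K - 1), S) of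
        (c, S) \<Rightarrow> (c(?K := Suc (c ?K)), S)) = x"
      using x top by auto
  next
    fix x assume "x \<in> ?B"
    then obtain c S where x: "x = (c, S)" and supp: "{i. c i \<noteq> 0} \<subseteq> {1..?K}"
      and parts: "sum c {1..?K} \<le> b" and S: "S \<subseteq> {i. c i \<noteq> 0}"
      by (cases x) (simp add: mem_overpartitions_bounded)
    have "sum (c(?K := Suc (c ?K))) {1..?K} = Suc (sum c {1..?K})"
      using sum_fun_upd_add[of "{1..?K}" ?K c "Suc (c ?K)"] by simp
    then show "(case x of (c, S) \<Rightarrow> (c(?K := Suc (c ?K)), S)) \<in> ?A"
      using supp parts S x by (auto simp: mem_overpartitions_bounded)
    show "(case case x of (c, S) \<Rightarrow> (c(?K := Suc (c ?K)), S) of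
        (c, S) \<Rightarrow> (c(?K := c ?K - 1), S)) = x"
      using x by auto
  qed
  then show ?thesis by (simp add: sum_distrib_left)
qed

lemma sum_op_monomial_overlined_top:
  "sum (op_monomial q t)
     {(c, S) \<in> overpartitions_bounded (Suc k) (Suc b). c (Suc k) = 1 \<and> Suc k \<in> S}
   = t * q ^ Suc k * sum (op_monomial q t) (overpartitions_bounded k b)"
  (is "sum _ ?A = _ * sum _ ?B")
proof -
  let ?K = "Suc k"
  have "sum (op_monomial q t) ?A = (\<Sum>x\<in>?B. t * q ^ ?K * op_monomial q t x)"
  proof (rule sum.reindex_bij_witness[where i = "\<lambda>(c, S). (c(?K := 1), insert ?K S)"
        and j = "\<lambda>(c, S). (c(?K := 0), S - {?K})"])
    fix x assume "x \<in> ?A"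
    then obtain c S where x: "x = (c, S)" and supp: "{i. c i \<noteq> 0} \<subseteq> {1..?K}"
      and parts: "sum c {1..?K} \<le> Suc b" and S: "S \<subseteq> {i. c i \<noteq> 0}"
      and top: "c ?K = 1" "?K \<in> S"
      by (auto simp: mem_overpartitions_bounded)
    define d where "d = c(?K := 0)"
    have c: "c = d(?K := Suc (d ?K))" using top by (auto simp: d_def)
    have supp_d: "{i. d i \<noteq> 0} \<subseteq> {1..k}"
    proof
      fix i assume "i \<in> {i. d i \<noteq> 0}"
      then have "i \<in> {1..?K}" "i \<noteq> ?K" using supp by (auto simp: d_def split: if_splits)
      then show "i \<in> {1..k}" by auto
    qed
    have "sum d {1..k} = sum c {1..k}" by (simp add: d_def)
    moreover have "op_weight c = op_weight d + ?K"
      using supp_d c op_weight_add_part[of d ?K] by (metis finite_atLeastAtMost finite_subset)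
    moreover have "card S = Suc (card (S - {?K}))"
      using S supp top(2) by (metis card_Suc_Diff1 finite_atLeastAtMost finite_subset)
    moreover have "S - {?K} \<subseteq> {i. d i \<noteq> 0}" using S by (auto simp: d_def)
    ultimately show "(case x of (c, S) \<Rightarrow> (c(?K := 0), S - {?K})) \<in> ?B"
      and "t * q ^ ?K * op_monomial q t (case x of (c, S) \<Rightarrow> (c(?K := 0), S - {?K}))
        = op_monomial q t x"
      using supp_d parts top(1) x
      by (auto simp: mem_overpartitions_bounded op_monomial_def power_add d_def)
    show "(case case x of (c, S) \<Rightarrow> (c(?K := 0), S - {?K}) of
        (c, S) \<Rightarrow> (c(?K := 1), insert ?K S)) = x"
      using x top by auto
  next
    fix x assume "x \<in> ?B"
    then obtain c S where x: "x = (c, S)" and supp: "{i. c i \<noteq> 0} \<subseteq> {1..k}"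
      and parts: "sum c {1..k} \<le> b" and S: "S \<subseteq> {i. c i \<noteq> 0}"
      by (cases x) (simp add: mem_overpartitions_bounded)
    have top: "c ?K = 0" using supp by auto
    then show "(case x of (c, S) \<Rightarrow> (c(?K := 1), insert ?K S)) \<in> ?A"
      using supp parts S x by (auto simp: mem_overpartitions_bounded)
    show "(case case x of (c, S) \<Rightarrow> (c(?K := 1), insert ?K S) of
        (c, S) \<Rightarrow> (c(?K := 0), S - {?K})) = x"
      using x top S by auto
  qed
  then show ?thesis by (simp add: sum_distrib_left)
qed

lemma sum_op_monomial_Suc_Suc:
  "sum (op_monomial q t) (overpartitions_bounded (Suc k) (Suc b)) =
     sum (op_monomial q t) (overpartitions_bounded k (Suc b)) +
     q ^ Suc k * (sum (op_monomial q t) (overpartitions_bounded (Suc k) b)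
       + t * sum (op_monomial q t) (overpartitions_bounded k b))"
proof -
  let ?K = "Suc k" and ?P = "overpartitions_bounded (Suc k) (Suc b)"
  let ?Z = "{(c, S) \<in> ?P. c ?K = 0}"
    and ?A = "{(c, S) \<in> ?P. c ?K \<noteq> 0 \<and> (c ?K = 1 \<longrightarrow> ?K \<notin> S)}"
    and ?B = "{(c, S) \<in> ?P. c ?K = 1 \<and> ?K \<in> S}"
  have fin: "finite ?Z" "finite ?A" "finite ?B"
    by (auto intro: finite_subset[OF _ finite_overpartitions_bounded])
  have "sum (op_monomial q t) ?P = sum (op_monomial q t) (?Z \<union> (?A \<union> ?B))"
    by (rule arg_cong[where f = "sum _"]) auto
  also have "\<dots> = sum (op_monomial q t) ?Z + sum (op_monomial q t) (?A \<union> ?B)"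
    using fin by (intro sum.union_disjoint) auto
  also have "sum (op_monomial q t) (?A \<union> ?B) = sum (op_monomial q t) ?A + sum (op_monomial q t) ?B"
    using fin by (intro sum.union_disjoint) auto
  also have "sum (op_monomial q t) ?Z = sum (op_monomial q t) (overpartitions_bounded k (Suc b))"
    by (simp only: overpartitions_bounded_Suc_no_top_part)
  also have "sum (op_monomial q t) ?A = q ^ ?K * sum (op_monomial q t) (overpartitions_bounded ?K b)"
    by (rule sum_op_monomial_plain_top)
  also have "sum (op_monomial q t) ?B = t * q ^ ?K * sum (op_monomial q t) (overpartitions_bounded k b)"
    by (rule sum_op_monomial_overlined_top)
  finally show ?thesis by (simp add: algebra_simps)
qed

locale overpartition_recurrence =
  fixes q t :: "'a::comm_ring_1" and G :: "nat \<Rightarrow> nat \<Rightarrow> 'a"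
  assumes G_0_left [simp]: "G 0 b = 1"
    and G_0_right [simp]: "G k 0 = 1"
    and G_Suc_Suc: "G (Suc k) (Suc b) = G k (Suc b) + q ^ Suc k * (G (Suc k) b + t * G k b)"
begin

lemma G_Suc_1: "G (Suc k) (Suc 0) = 1 + q * (G k (Suc 0) + t)"
proof (induction k)
  case (Suc k)
  have "G (Suc (Suc k)) (Suc 0) = G (Suc k) (Suc 0) + q ^ Suc (Suc k) * (1 + t)"
    using G_Suc_Suc[of "Suc k" 0] by simp
  also have "\<dots> = 1 + q * ((G k (Suc 0) + q ^ Suc k * (1 + t)) + t)"
    using Suc.IH by (simp add: algebra_simps)
  also have "G k (Suc 0) + q ^ Suc k * (1 + t) = G (Suc k) (Suc 0)"
    using G_Suc_Suc[of k 0] by simp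
  finally show ?case .
qed (simp add: G_Suc_Suc)

lemma G_1_Suc: "G (Suc 0) (Suc b) = G (Suc 0) b + q ^ Suc b * (1 + t)"
proof (induction b)
  case (Suc b)
  then show ?case using G_Suc_Suc[of 0 "Suc b"] G_Suc_Suc[of 0 b] by (simp add: algebra_simps)
qed (simp add: G_Suc_Suc)

lemma G_Suc_Suc_parts:
  "G (Suc k) (Suc b) = G (Suc k) b + q ^ Suc b * (G k (Suc b) + t * G k b)"
proof -
  \<comment> \<open>The residual D obeys the largest-part recurrence with zero boundary values.\<close>
  define D where "D k b = G (Suc k) (Suc b) - G (Suc k) b - q ^ Suc b * (G k (Suc b) + t * G k b)"
    for k b
  have D_Suc_Suc: "D (Suc k) (Suc b) = D k (Suc b) + q ^ Suc (Suc k) * (D (Suc k) b + t * D k b)"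
    for k b unfolding D_def by (simp add: G_Suc_Suc algebra_simps)
  have D_0_left: "D 0 b = 0" for b
    using G_1_Suc by (simp add: D_def)
  have D_0_right: "D k 0 = 0" for k
    using G_Suc_1 by (simp add: D_def)
  have "D k b = 0" for k b
  proof (induction k arbitrary: b)
    case (Suc k)
    then show ?case by (induction b) (simp_all add: D_0_right D_Suc_Suc)
  qed (rule D_0_left)
  from this[of k b] show ?thesis
    unfolding D_def by (simp add: algebra_simps)
qed

lemma G_sym: "G k b = G b k"
proof (induction k arbitrary: b)
  case (Suc k)
  then show ?case
    by (induction b) (simp_all add: G_Suc_Suc[of k] G_Suc_Suc_parts[of _ k])
qed simp

lemma G_Suc_right_eq_sum:
  "G n (Suc m) = 1 + (\<Sum>j = 1..n. q ^ j * (G j m + t * G (j - 1) m))"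
  by (induction n) (simp_all add: G_Suc_Suc algebra_simps)

end

interpretation overpartitions:
  overpartition_recurrence q t "\<lambda>k b. sum (op_monomial q t) (overpartitions_bounded k b)" for q t
  by unfold_locales
    (simp_all add: overpartitions_bounded_0_left overpartitions_bounded_0_right
      sum_op_monomial_Suc_Suc)

lemma over_gauss_eq_sum_op_monomial:
  "over_gauss a b q t = sum (op_monomial q t) (overpartitions_bounded (a - b) b)"
  unfolding over_gauss_def op_monomial_def ..

theorem proposition4p1:
  fixes m n :: nat and q t :: "'a::comm_ring_1"
  assumes "m \<ge> 1" and "n \<ge> 1"
  shows "over_gauss (m + n + 1) (m + 1) q t =
    1 + (\<Sum>j = 1..n. q ^ j * (over_gauss (m + j) j q t + t * over_gauss (m + j - 1) (j - 1) q t))"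
proof -
  have "over_gauss (m + j) j q t = sum (op_monomial q t) (overpartitions_bounded j m)" for j
    using overpartitions.G_sym by (simp add: over_gauss_eq_sum_op_monomial)
  moreover have "over_gauss (m + j - 1) (j - 1) q t =
      sum (op_monomial q t) (overpartitions_bounded (j - 1) m)" if "j \<ge> 1" for j
    using that overpartitions.G_sym by (simp add: over_gauss_eq_sum_op_monomial)
  ultimately show ?thesis
    using overpartitions.G_Suc_right_eq_sum[of q t n m]
    by (simp add: over_gauss_eq_sum_op_monomial)
qed

end
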